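(* Let $\Lambda$ be a block of bounded weights. The map $a\lambda b\mapsto\mathrm{cl}(a\lambda b)$ is a degree-preserving bijection between the set of oriented circle diagrams with underlying weight in $\Lambda$ and the set of closed oriented circle diagrams with underlying weight in $\mathrm{cl}(\Lambda)$.
   Context: A number line carries vertices indexed by consecutive integers. A weight labels each vertex by $\circ,\times,\vee,\wedge$; bounded if finitely many vertices. A block is an equivalence class of weights under permuting $\vee$'s and $\wedge$'s. Cup diagrams: finitely many non-crossing cups joining pairs of vertices and rays down to infinity; cap diagrams similarly upward; $c^*$ mirror image. $c\lambda$ is an oriented cup diagram if free vertices are $\circ/\times$, cups have one $\vee$ and one $\wedge$ end, ray vertices are $\vee/\wedge$, and no two rays are labelled $\vee,\wedge$ in that order left to right; $\lambda c$ (cap diagram) oriented iff $c^*\lambda$ is. Degree: number of clockwise cups/caps (left end $\wedge$). Oriented circle diagram $a\lambda b$: $a\lambda$ and $\lambda b$ oriented; $\deg(a\lambda b)=\deg(a\lambda)+\deg(\lambda b)$; closed if no rays. $\underline\lambda$: unique cup diagram with $\underline\lambda\lambda$ oriented of degree $0$; $\overline\lambda=(\underline\lambda)^*$. If $a\lambda b$ is oriented with $\lambda\in\Lambda$, then $a=\underline\alpha$, $b=\overline\beta$ for unique $\alpha,\beta\in\Lambda$. Closure: if weights in $\Lambda$ have $p$ labels $\wedge$ and $q$ labels $\vee$, $\mathrm{cl}(\lambda)$ adds $p$ vertices labelled $\vee$ at the left end and $q$ labelled $\wedge$ at the right end; for $\alpha,\beta\in\Lambda$, $\mathrm{cl}(\underline\alpha):=\underline{\mathrm{cl}(\alpha)}$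 and $\mathrm{cl}(\overline\beta):=\overline{\mathrm{cl}(\beta)}$; and $\mathrm{cl}(a\lambda b):=\mathrm{cl}(a)\mathrm{cl}(\lambda)\mathrm{cl}(b)$. *)

theory Defs
  imports "HOL-Combinatorics.Permutations"
begin

text \<open>Labels: Circ = o, Cross = x, Vee = down-label, Wedge = up-label.\<close>
datatype label = Circ | Cross | Vee | Wedge

text \<open>A bounded weight on consecutive vertices, vertex k of the list being the
  k-th vertex from the left (positions 0 ..< length).\<close>
type_synonym weight = "label list"

definition is_block :: "weight set \<Rightarrow> bool" where
  "is_block \<Lambda> \<longleftrightarrow> (\<exists>w0. \<Lambda> = {\<mu>. \<exists>\<sigma>. \<sigma> permutes {..<length w0}
       \<and> (\<forall>i<length w0. w0 ! i \<in> {Circ, Cross} \<longrightarrow> \<sigma> i = i)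
       \<and> \<mu> = map (\<lambda>i. w0 ! \<sigma> i) [0..<length w0]})"

text \<open>A (cup) diagram: a set of cups (i,j) with i<j and a set of ray vertices.
  A cap diagram c is encoded by the data of its mirror image c* (a cup diagram).\<close>
type_synonym diag = "(nat \<times> nat) set \<times> nat set"

definition wf_diag :: "nat \<Rightarrow> diag \<Rightarrow> bool" where
  "wf_diag n c \<longleftrightarrow> (let C = fst c; R = snd c in
     (\<forall>(i,j)\<in>C. i < j \<and> j < n) \<and> (\<forall>r\<in>R. r < n)
     \<and> (\<forall>(i,j)\<in>C. \<forall>(k,l)\<in>C. (i,j) \<noteq> (k,l) \<longrightarrow> {i,j} \<inter> {k,l} = {})
     \<and> (\<forall>(i,j)\<in>C. i \<notin> R \<and> j \<notin> R)
     \<and> (\<forall>(i,j)\<in>C. \<forall>(k,l)\<in>C. \<not> (i < k \<and> k < j \<and> j < l))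
     \<and> (\<forall>(i,j)\<in>C. \<forall>r\<in>R. \<not> (i < r \<and> r < j)))"

definition free_vertex :: "diag \<Rightarrow> nat \<Rightarrow> bool" where
  "free_vertex c v \<longleftrightarrow> v \<notin> snd c \<and> (\<forall>(i,j)\<in>fst c. v \<noteq> i \<and> v \<noteq> j)"

text \<open>cw is an oriented cup diagram (for a cap diagram b encoded by b*, this is
  the condition that wb is oriented).\<close>
definition oriented :: "diag \<Rightarrow> weight \<Rightarrow> bool" where
  "oriented c w \<longleftrightarrow> wf_diag (length w) c
     \<and> (\<forall>v<length w. free_vertex c v \<longrightarrow> w ! v \<in> {Circ, Cross})
     \<and> (\<forall>(i,j)\<in>fst c. {w ! i, w ! j} = {Vee, Wedge})
     \<and> (\<forall>r\<in>snd c. w ! r \<in> {Vee, Wedge})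
     \<and> (\<forall>r\<in>snd c. \<forall>s\<in>snd c. r < s \<longrightarrow> \<not> (w ! r = Vee \<and> w ! s = Wedge))"

text \<open>Degree: number of clockwise cups (left end labelled Wedge).\<close>
definition deg :: "diag \<Rightarrow> weight \<Rightarrow> nat" where
  "deg c w = card {(i,j)\<in>fst c. w ! i = Wedge}"

type_synonym circ = "diag \<times> weight \<times> diag"

definition oriented_circ :: "circ \<Rightarrow> bool" where
  "oriented_circ x \<longleftrightarrow> (case x of (a, w, b) \<Rightarrow> oriented a w \<and> oriented b w)"

definition deg_circ :: "circ \<Rightarrow> nat" where
  "deg_circ x = (case x of (a, w, b) \<Rightarrow> deg a w + deg b w)"

definition closed_circ :: "circ \<Rightarrow> bool" where
  "closed_circ x \<longleftrightarrow> (case x of (a, w, b) \<Rightarrow> snd a = {} \<and> snd b = {})"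

definition circ_diagrams :: "weight set \<Rightarrow> circ set" where
  "circ_diagrams \<Lambda> = {x. oriented_circ x \<and> fst (snd x) \<in> \<Lambda>}"

definition closed_circ_diagrams :: "weight set \<Rightarrow> circ set" where
  "closed_circ_diagrams \<Lambda> = {x. oriented_circ x \<and> closed_circ x \<and> fst (snd x) \<in> \<Lambda>}"

text \<open>underline w: the unique cup diagram with underline w w oriented of degree 0;
  overline w = (underline w)*, which in our encoding of cap diagrams has the same data.\<close>
definition cup_under :: "weight \<Rightarrow> diag" where
  "cup_under w = (THE c. oriented c w \<and> deg c w = 0)"

definition cap_over :: "weight \<Rightarrow> diag" where
  "cap_over w = cup_under w"

text \<open>Closure of a weight: prepend p Vee's and append q Wedge's, where p, q are the
  numbers of Wedge and Vee labels (constant on a block).\<close>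
definition clw :: "weight \<Rightarrow> weight" where
  "clw w = replicate (count_list w Wedge) Vee @ w @ replicate (count_list w Vee) Wedge"

definition cl_cup :: "weight set \<Rightarrow> diag \<Rightarrow> diag" where
  "cl_cup \<Lambda> a = cup_under (clw (THE \<alpha>. \<alpha> \<in> \<Lambda> \<and> cup_under \<alpha> = a))"

definition cl_cap :: "weight set \<Rightarrow> diag \<Rightarrow> diag" where
  "cl_cap \<Lambda> b = cap_over (clw (THE \<beta>. \<beta> \<in> \<Lambda> \<and> cap_over \<beta> = b))"

definition cl_circ :: "weight set \<Rightarrow> circ \<Rightarrow> circ" where
  "cl_circ \<Lambda> x = (case x of (a, w, b) \<Rightarrow> (cl_cup \<Lambda> a, clw w, cl_cap \<Lambda> b))"

end

theory Submission
  imports Defs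
begin

text \<open>Every oriented cup diagram a of a weight w has a unique degree-0 orientation
  \<alpha> in the block of w, obtained by swapping the labels of its clockwise cups, and a is the
  degree-0 cup diagram of \<alpha>; so cl(a) is the degree-0 cup diagram A of cl(\<alpha>). Degree-0
  cup diagrams exist uniquely (peel off adjacent Vee-Wedge pairs), and on a closure they have no
  rays, since there every Wedge is preceded by more Vee's than Wedge's. Cutting A down to
  the window of the original vertices, where cups leaving the window become rays, gives back a;
  this restriction preserves orientations, degrees and degree-0-ness and is compatible with
  relabelling, which shows that cl(a) is oriented by cl(w) with the same degree, and that
  restriction inverts the closure map on closed circle diagrams.\<close>

section \<open>Oriented cup diagrams\<close>

lemma doubleton_Vee_Wedge_iff:
  "{a, b} = {Vee, Wedge} \<longleftrightarrow> (a = Vee \<and> b = Wedge) \<or> (a = Wedge \<and> b = Vee)"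
  by (auto simp: doubleton_eq_iff)

lemma wf_diagD:
  assumes "wf_diag n c"
  shows "\<And>i j. (i,j) \<in> fst c \<Longrightarrow> i < j \<and> j < n"
    and "\<And>r. r \<in> snd c \<Longrightarrow> r < n"
    and "\<And>i j k l. (i,j) \<in> fst c \<Longrightarrow> (k,l) \<in> fst c \<Longrightarrow> (i,j) \<noteq> (k,l) \<Longrightarrow> {i,j} \<inter> {k,l} = {}"
    and "\<And>i j. (i,j) \<in> fst c \<Longrightarrow> i \<notin> snd c \<and> j \<notin> snd c"
    and "\<And>i j k l. (i,j) \<in> fst c \<Longrightarrow> (k,l) \<in> fst c \<Longrightarrow> \<not> (i < k \<and> k < j \<and> j < l)"
    and "\<And>i j r. (i,j) \<in> fst c \<Longrightarrow> r \<in> snd c \<Longrightarrow> \<not> (i < r \<and> r < j)"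
  using assms by (auto simp: wf_diag_def Let_def)

lemma wf_diagI:
  assumes "\<And>i j. (i,j) \<in> fst c \<Longrightarrow> i < j \<and> j < n"
    and "\<And>r. r \<in> snd c \<Longrightarrow> r < n"
    and "\<And>i j k l. (i,j) \<in> fst c \<Longrightarrow> (k,l) \<in> fst c \<Longrightarrow> (i,j) \<noteq> (k,l) \<Longrightarrow> {i,j} \<inter> {k,l} = {}"
    and "\<And>i j. (i,j) \<in> fst c \<Longrightarrow> i \<notin> snd c \<and> j \<notin> snd c"
    and "\<And>i j k l. (i,j) \<in> fst c \<Longrightarrow> (k,l) \<in> fst c \<Longrightarrow> \<not> (i < k \<and> k < j \<and> j < l)"
    and "\<And>i j r. (i,j) \<in> fst c \<Longrightarrow> r \<in> snd c \<Longrightarrow> \<not> (i < r \<and> r < j)"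
  shows "wf_diag n c"
  unfolding wf_diag_def Let_def by (intro conjI; use assms in fast)

lemma orientedD:
  assumes "oriented c w"
  shows "wf_diag (length w) c"
    and "\<And>v. v < length w \<Longrightarrow> free_vertex c v \<Longrightarrow> w ! v = Circ \<or> w ! v = Cross"
    and "\<And>i j. (i,j) \<in> fst c \<Longrightarrow> (w ! i = Vee \<and> w ! j = Wedge) \<or> (w ! i = Wedge \<and> w ! j = Vee)"
    and "\<And>r. r \<in> snd c \<Longrightarrow> w ! r = Vee \<or> w ! r = Wedge"
    and "\<And>r s. r \<in> snd c \<Longrightarrow> s \<in> snd c \<Longrightarrow> r < s \<Longrightarrow> \<not> (w ! r = Vee \<and> w ! s = Wedge)"
  using assms unfolding oriented_def doubleton_Vee_Wedge_iff by blast+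

lemma orientedI:
  assumes "wf_diag (length w) c"
    and "\<And>v. v < length w \<Longrightarrow> free_vertex c v \<Longrightarrow> w ! v = Circ \<or> w ! v = Cross"
    and "\<And>i j. (i,j) \<in> fst c \<Longrightarrow> (w ! i = Vee \<and> w ! j = Wedge) \<or> (w ! i = Wedge \<and> w ! j = Vee)"
    and "\<And>r. r \<in> snd c \<Longrightarrow> w ! r = Vee \<or> w ! r = Wedge"
    and "\<And>r s. r \<in> snd c \<Longrightarrow> s \<in> snd c \<Longrightarrow> r < s \<Longrightarrow> \<not> (w ! r = Vee \<and> w ! s = Wedge)"
  shows "oriented c w"
  unfolding oriented_def doubleton_Vee_Wedge_iff by (intro conjI; use assms in fast)

lemma free_vertex_iff:
  "free_vertex c v \<longleftrightarrow> v \<notin> snd c \<and> (\<forall>x. (v,x) \<notin> fst c) \<and> (\<forall>x. (x,v) \<notin> fst c)"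
  unfolding free_vertex_def by fastforce

lemma oriented_finite:
  assumes "oriented c w"
  shows "finite (fst c)" "finite (snd c)"
proof -
  note W = wf_diagD(1,2)[OF orientedD(1)[OF assms]]
  have "fst c \<subseteq> {..<length w} \<times> {..<length w}"
    using W(1) by force
  then show "finite (fst c)"
    by (rule finite_subset) simp
  have "snd c \<subseteq> {..<length w}"
    using W(2) by blast
  then show "finite (snd c)"
    by (rule finite_subset) simp
qed

lemma oriented_Vee_Wedge_not_free:
  assumes "oriented c w" "v < length w" "w ! v = Vee \<or> w ! v = Wedge"
  shows "v \<in> snd c \<or> (\<exists>j. (v,j) \<in> fst c) \<or> (\<exists>i. (i,v) \<in> fst c)"
  using assms unfolding oriented_def free_vertex_def by fastforce

section \<open>Degree-zero orientations\<close>

definition anticlockwise :: "diag \<Rightarrow> weight \<Rightarrow> bool" where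
  "anticlockwise c w \<longleftrightarrow> oriented c w \<and> (\<forall>(i,j)\<in>fst c. w ! i = Vee \<and> w ! j = Wedge)"

lemma deg_eq_0_iff_anticlockwise:
  assumes "oriented c w"
  shows "deg c w = 0 \<longleftrightarrow> anticlockwise c w"
proof -
  have "finite {(i,j)\<in>fst c. w ! i = Wedge}"
    using oriented_finite[OF assms] by (auto intro: finite_subset)
  then have "deg c w = 0 \<longleftrightarrow> (\<forall>(i,j)\<in>fst c. w ! i \<noteq> Wedge)"
    unfolding deg_def by (auto simp: card_eq_0_iff)
  also have "\<dots> \<longleftrightarrow> (\<forall>(i,j)\<in>fst c. w ! i = Vee \<and> w ! j = Wedge)"
    using orientedD(3)[OF assms] by fastforce
  finally show ?thesis
    using assms unfolding anticlockwise_def by simp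
qed

definition adjacent_Vee_Wedge :: "weight \<Rightarrow> nat \<Rightarrow> nat \<Rightarrow> bool" where
  "adjacent_Vee_Wedge w i j \<longleftrightarrow> i < j \<and> j < length w \<and> w ! i = Vee \<and> w ! j = Wedge
     \<and> (\<forall>v. i < v \<and> v < j \<longrightarrow> w ! v = Circ \<or> w ! v = Cross)"

text \<open>Take the first Wedge to the right of i and the last Vee before it.\<close>
lemma adjacent_Vee_Wedge_exists:
  assumes "i < k" "k < length w" "w ! i = Vee" "w ! k = Wedge"
  shows "\<exists>i j. adjacent_Vee_Wedge w i j"
proof -
  define j where "j = (LEAST j. i < j \<and> j < length w \<and> w ! j = Wedge)"
  have j: "i < j" "j < length w" "w ! j = Wedge"
    using LeastI[of "\<lambda>j. i < j \<and> j < length w \<and> w ! j = Wedge" k] assms unfolding j_def by auto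
  have j_least: "\<And>v. i < v \<Longrightarrow> v < j \<Longrightarrow> w ! v \<noteq> Wedge"
    using not_less_Least j(2) unfolding j_def by fastforce
  define i' where "i' = (GREATEST i'. i' < j \<and> w ! i' = Vee)"
  have i': "i' < j" "w ! i' = Vee"
    using GreatestI_nat[of "\<lambda>i'. i' < j \<and> w ! i' = Vee" i j] j assms unfolding i'_def by auto
  have i'_greatest: "\<And>v. v < j \<Longrightarrow> w ! v = Vee \<Longrightarrow> v \<le> i'"
    using Greatest_le_nat[of "\<lambda>i'. i' < j \<and> w ! i' = Vee" _ j] unfolding i'_def by auto
  have "i \<le> i'"
    using i'_greatest j(1) assms(3) by blast
  have "adjacent_Vee_Wedge w i' j"
    unfolding adjacent_Vee_Wedge_def
  proof (intro conjI allI impI)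
    fix v assume "i' < v \<and> v < j"
    then have "w ! v \<noteq> Vee" "w ! v \<noteq> Wedge"
      using i'_greatest[of v] j_least[of v] \<open>i \<le> i'\<close> by auto
    then show "w ! v = Circ \<or> w ! v = Cross"
      by (cases "w ! v") auto
  qed (use i' j in auto)
  then show ?thesis by blast
qed

lemma anticlockwise_adjacent_cup:
  assumes D: "anticlockwise c w" and P: "adjacent_Vee_Wedge w i j"
  shows "(i,j) \<in> fst c"
proof -
  have O: "oriented c w" and lab: "\<And>x y. (x,y) \<in> fst c \<Longrightarrow> w ! x = Vee \<and> w ! y = Wedge"
    using D unfolding anticlockwise_def by auto
  note W = wf_diagD[OF orientedD(1)[OF O]]
  have ij: "i < j" "j < length w" "w ! i = Vee" "w ! j = Wedge"
    and between: "\<And>v. i < v \<Longrightarrow> v < j \<Longrightarrow> w ! v = Circ \<or> w ! v = Cross"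
    using P unfolding adjacent_Vee_Wedge_def by auto
  have no_cup_from_j: "(j,l) \<notin> fst c" for l
    using lab ij(4) by force
  have no_cup_into_i: "(x,i) \<notin> fst c" for x
    using lab ij(3) by force
  have no_cup_end_between: "\<not> (i < x \<and> x < j)" if "(x,y) \<in> fst c \<or> (y,x) \<in> fst c" for x y
    using that between[of x] lab by fastforce
  have j_end: "j \<in> snd c \<or> (\<exists>x. (x,j) \<in> fst c)"
    using oriented_Vee_Wedge_not_free[OF O ij(2)] ij(4) no_cup_from_j by blast
  have "i \<notin> snd c"
  proof
    assume ir: "i \<in> snd c"
    show False
    proof (cases "j \<in> snd c")
      case True
      then show False using orientedD(5)[OF O ir True ij(1)] ij by simp
    next
      case False
      then obtain x where c: "(x,j) \<in> fst c" using j_end by blast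
      have "x \<noteq> i" "\<not> x < i" using W(4)[OF c] W(6)[OF c ir] ir ij(1) by auto
      then show False using no_cup_end_between[of x j] c W(1)[OF c] by auto
    qed
  qed
  then obtain k where ik: "(i,k) \<in> fst c"
    using oriented_Vee_Wedge_not_free[OF O, of i] ij no_cup_into_i by auto
  have "k = j"
  proof (rule ccontr)
    assume "k \<noteq> j"
    with no_cup_end_between[of k i] ik W(1)[OF ik] have jk: "j < k" by auto
    show False
    proof (cases "j \<in> snd c")
      case True
      then show False using W(6)[OF ik True] ij(1) jk by blast
    next
      case False
      then obtain x where c: "(x,j) \<in> fst c" using j_end by blast
      have "x \<noteq> i" "\<not> x < i"
        using W(3)[OF c ik] W(5)[OF c ik] \<open>k \<noteq> j\<close> ij(1) jk by auto
      then show False using no_cup_end_between[of x j] c W(1)[OF c] by auto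
    qed
  qed
  then show ?thesis using ik by simp
qed

lemma count_list_update:
  assumes "i < length xs"
  shows "count_list (xs[i := y]) x
    = count_list xs x - (if xs ! i = x then 1 else 0) + (if y = x then 1 else 0)"
  using assms by (simp add: count_mset[symmetric] mset_update nth_mem_mset)

lemma wf_diag_mono:
  assumes "wf_diag n c" "fst c' \<subseteq> fst c" "snd c' \<subseteq> snd c"
  shows "wf_diag n c'"
proof -
  note W = wf_diagD[OF assms(1)]
  show ?thesis
    by (rule wf_diagI) (use W assms(2,3) in \<open>meson subsetD\<close>)+
qed

lemma anticlockwise_remove_cup:
  assumes D: "anticlockwise c w" and ij: "(i,j) \<in> fst c"
  shows "anticlockwise (fst c - {(i,j)}, snd c) (w[i := Circ, j := Circ])"
proof -
  let ?w = "w[i := Circ, j := Circ]" and ?c = "(fst c - {(i,j)}, snd c)"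
  have O: "oriented c w" and lab: "\<And>x y. (x,y) \<in> fst c \<Longrightarrow> w ! x = Vee \<and> w ! y = Wedge"
    using D unfolding anticlockwise_def by auto
  note W = wf_diagD[OF orientedD(1)[OF O]]
  have other_ends: "x \<noteq> i \<and> x \<noteq> j \<and> y \<noteq> i \<and> y \<noteq> j" if "(x,y) \<in> fst ?c" for x y
    using that W(3)[OF ij, of x y] by auto
  have ray_ends: "r \<noteq> i \<and> r \<noteq> j" if "r \<in> snd c" for r
    using that W(4)[OF ij] by auto
  have "oriented ?c ?w"
  proof (rule orientedI)
    show "wf_diag (length ?w) ?c"
      using wf_diag_mono[OF orientedD(1)[OF O], of ?c] by simp
    show "?w ! v = Circ \<or> ?w ! v = Cross" if "v < length ?w" "free_vertex ?c v" for v
    proof (cases "v = i \<or> v = j")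
      case True
      then show ?thesis using W(1)[OF ij] by (auto simp: nth_list_update)
    next
      case False
      then have "free_vertex c v" using that(2) unfolding free_vertex_iff by auto
      then show ?thesis using orientedD(2)[OF O, of v] that(1) False by simp
    qed
    show "?w ! r = Vee \<or> ?w ! r = Wedge" if "r \<in> snd ?c" for r
      using that ray_ends[of r] orientedD(4)[OF O, of r] by simp
    show "\<not> (?w ! r = Vee \<and> ?w ! s = Wedge)" if "r \<in> snd ?c" "s \<in> snd ?c" "r < s" for r s
      using that ray_ends[of r] ray_ends[of s] orientedD(5)[OF O, of r s] by simp
    show "(?w ! x = Vee \<and> ?w ! y = Wedge) \<or> (?w ! x = Wedge \<and> ?w ! y = Vee)"
      if "(x,y) \<in> fst ?c" for x y
      using that other_ends[OF that] lab[of x y] by simp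
  qed
  moreover have "?w ! x = Vee \<and> ?w ! y = Wedge" if "(x,y) \<in> fst ?c" for x y
    using that other_ends[OF that] lab[of x y] by simp
  ultimately show ?thesis unfolding anticlockwise_def by blast
qed

lemma wf_diag_insert_cup:
  assumes wf: "wf_diag n c" and ij: "i < j" "j < n"
    and cup_outside: "\<And>x y. (x,y) \<in> fst c \<Longrightarrow> \<not> (i \<le> x \<and> x \<le> j) \<and> \<not> (i \<le> y \<and> y \<le> j)"
    and ray_outside: "\<And>r. r \<in> snd c \<Longrightarrow> \<not> (i \<le> r \<and> r \<le> j)"
  shows "wf_diag n (insert (i,j) (fst c), snd c)"
proof -
  note W = wf_diagD[OF wf]
  let ?c = "(insert (i,j) (fst c), snd c)"
  show ?thesis
  proof (rule wf_diagI)
    show "{x,y} \<inter> {k,l} = {}" if "(x,y) \<in> fst ?c" "(k,l) \<in> fst ?c" "(x,y) \<noteq> (k,l)" for x y k l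
      using that W(3) cup_outside ij(1) by fastforce
    show "\<not> (x < k \<and> k < y \<and> y < l)" if "(x,y) \<in> fst ?c" "(k,l) \<in> fst ?c" for x y k l
      using that W(5) cup_outside ij(1) by fastforce
    show "x < y \<and> y < n" if "(x,y) \<in> fst ?c" for x y
      using that W(1) ij by auto
    show "x \<notin> snd ?c \<and> y \<notin> snd ?c" if "(x,y) \<in> fst ?c" for x y
      using that W(4) ij(1) ray_outside by fastforce
    show "\<not> (x < r \<and> r < y)" if "(x,y) \<in> fst ?c" "r \<in> snd ?c" for x y r
      using that W(6) ray_outside by fastforce
  qed (use W(2) in simp)
qed

lemma anticlockwise_insert_cup:
  assumes D: "anticlockwise c (w[i := Circ, j := Circ])" and P: "adjacent_Vee_Wedge w i j"
  shows "anticlockwise (insert (i,j) (fst c), snd c) w"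
proof -
  let ?w = "w[i := Circ, j := Circ]" and ?c = "(insert (i,j) (fst c), snd c)"
  have ij: "i < j" "j < length w" "w ! i = Vee" "w ! j = Wedge"
    and between: "\<And>v. i < v \<Longrightarrow> v < j \<Longrightarrow> w ! v = Circ \<or> w ! v = Cross"
    using P unfolding adjacent_Vee_Wedge_def by auto
  have O: "oriented c ?w" and lab: "\<And>x y. (x,y) \<in> fst c \<Longrightarrow> ?w ! x = Vee \<and> ?w ! y = Wedge"
    using D unfolding anticlockwise_def by auto
  have Circ_Cross: "?w ! v = Circ \<or> ?w ! v = Cross" if "i \<le> v" "v \<le> j" for v
    using that between ij by (auto simp: nth_list_update)
  have cup_outside: "\<not> (i \<le> x \<and> x \<le> j) \<and> \<not> (i \<le> y \<and> y \<le> j)" if "(x,y) \<in> fst c" for x y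
    using lab[OF that] Circ_Cross[of x] Circ_Cross[of y] by auto
  have ray_outside: "\<not> (i \<le> r \<and> r \<le> j)" if "r \<in> snd c" for r
    using orientedD(4)[OF O that] Circ_Cross[of r] by auto
  have unchanged: "?w ! v = w ! v" if "\<not> (i \<le> v \<and> v \<le> j)" for v
    using that ij(1) by auto
  have cup_labels: "w ! x = Vee \<and> w ! y = Wedge" if "(x,y) \<in> fst ?c" for x y
  proof (cases "(x,y) = (i,j)")
    case False
    then have "(x,y) \<in> fst c" using that by auto
    then show ?thesis using lab cup_outside unchanged by metis
  qed (use ij in simp)
  have "oriented ?c w"
  proof (rule orientedI)
    show "wf_diag (length w) ?c"
      using wf_diag_insert_cup[OF orientedD(1)[OF O]] ij cup_outside ray_outside by simp
    show "w ! v = Circ \<or> w ! v = Cross" if "v < length w" "free_vertex ?c v" for v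
    proof -
      have "v \<noteq> i" "v \<noteq> j" "free_vertex c v" using that(2) unfolding free_vertex_iff by auto
      then show ?thesis using orientedD(2)[OF O, of v] that(1) by simp
    qed
    show "(w ! x = Vee \<and> w ! y = Wedge) \<or> (w ! x = Wedge \<and> w ! y = Vee)" if "(x,y) \<in> fst ?c" for x y
      using cup_labels[OF that] by simp
    show "w ! r = Vee \<or> w ! r = Wedge" if "r \<in> snd ?c" for r
      using that orientedD(4)[OF O, of r] ray_outside[of r] unchanged[of r] by simp
    show "\<not> (w ! r = Vee \<and> w ! s = Wedge)" if "r \<in> snd ?c" "s \<in> snd ?c" "r < s" for r s
      using that orientedD(5)[OF O, of r s] ray_outside unchanged by simp
  qed
  then show ?thesis
    unfolding anticlockwise_def using cup_labels by blast
qed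

lemma anticlockwise_iff_all_rays:
  assumes "\<not> (\<exists>i j. adjacent_Vee_Wedge w i j)"
  shows "anticlockwise c w \<longleftrightarrow> c = ({}, {v. v < length w \<and> (w ! v = Vee \<or> w ! v = Wedge)})"
proof -
  have no_Vee_Wedge: "\<not> (w ! x = Vee \<and> w ! y = Wedge)" if "x < y" "y < length w" for x y
    using adjacent_Vee_Wedge_exists assms that by blast
  show ?thesis
  proof
    assume D: "anticlockwise c w"
    have O: "oriented c w" and lab: "\<And>x y. (x,y) \<in> fst c \<Longrightarrow> w ! x = Vee \<and> w ! y = Wedge"
      using D unfolding anticlockwise_def by auto
    note W = wf_diagD[OF orientedD(1)[OF O]]
    have "fst c = {}"
      using lab W(1) no_Vee_Wedge by fastforce
    moreover have "snd c = {v. v < length w \<and> (w ! v = Vee \<or> w ! v = Wedge)}"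
      using W(2) orientedD(4)[OF O] oriented_Vee_Wedge_not_free[OF O] \<open>fst c = {}\<close> by auto
    ultimately show "c = ({}, {v. v < length w \<and> (w ! v = Vee \<or> w ! v = Wedge)})"
      by (simp add: prod_eq_iff)
  next
    assume c: "c = ({}, {v. v < length w \<and> (w ! v = Vee \<or> w ! v = Wedge)})"
    have "oriented c w"
    proof (rule orientedI)
      show "wf_diag (length w) c"
        by (rule wf_diagI) (auto simp: c)
      show "w ! v = Circ \<or> w ! v = Cross" if "v < length w" "free_vertex c v" for v
        using that by (cases "w ! v") (auto simp: c free_vertex_iff)
    qed (use no_Vee_Wedge in \<open>auto simp: c\<close>)
    then show "anticlockwise c w"
      unfolding anticlockwise_def by (simp add: c)
  qed
qed

text \<open>Induction on the number of Vee's, peeling off an adjacent Vee-Wedge pair,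
  which must be a cup of every degree-0 orientation.\<close>
lemma ex1_anticlockwise: "\<exists>!c. anticlockwise c w"
proof (induction "count_list w Vee" arbitrary: w rule: less_induct)
  case less
  show ?case
  proof (cases "\<exists>i j. adjacent_Vee_Wedge w i j")
    case False
    then show ?thesis using anticlockwise_iff_all_rays[OF False] by simp
  next
    case True
    then obtain i j where P: "adjacent_Vee_Wedge w i j" by blast
    let ?w = "w[i := Circ, j := Circ]"
    have ij: "i < j" "j < length w" "w ! i = Vee" "w ! j = Wedge"
      using P unfolding adjacent_Vee_Wedge_def by auto
    then have "count_list w Vee \<noteq> 0"
      by (metis count_list_0_iff nth_mem order.strict_trans)
    with ij have "count_list ?w Vee < count_list w Vee"
      by (simp add: count_list_update nth_list_update)
    then obtain c where c: "anticlockwise c ?w" and unique: "\<And>d. anticlockwise d ?w \<Longrightarrow> d = c"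
      using less by metis
    show ?thesis
    proof (rule ex1I)
      show "anticlockwise (insert (i,j) (fst c), snd c) w"
        by (rule anticlockwise_insert_cup[OF c P])
      fix d assume d: "anticlockwise d w"
      have ij: "(i,j) \<in> fst d" by (rule anticlockwise_adjacent_cup[OF d P])
      have "(fst d - {(i,j)}, snd d) = c"
        by (rule unique[OF anticlockwise_remove_cup[OF d ij]])
      then show "d = (insert (i,j) (fst c), snd c)"
        using ij by (auto simp: prod_eq_iff)
    qed
  qed
qed

lemma anticlockwise_cup_under: "anticlockwise (cup_under w) w"
proof -
  have "\<exists>!c. oriented c w \<and> deg c w = 0"
    using ex1_anticlockwise[of w] deg_eq_0_iff_anticlockwise[of _ w]
    by (metis anticlockwise_def)
  then have "oriented (cup_under w) w \<and> deg (cup_under w) w = 0"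
    unfolding cup_under_def by (rule theI')
  then show ?thesis using deg_eq_0_iff_anticlockwise by blast
qed

lemma cup_under_eqI: "anticlockwise c w \<Longrightarrow> cup_under w = c"
  using ex1_anticlockwise[of w] anticlockwise_cup_under[of w] by blast

section \<open>Labels of cups and rays\<close>

lemma count_list_conv_card: "count_list w x = card {v. v < length w \<and> w ! v = x}"
  unfolding count_list_eq_length_filter length_filter_conv_card by metis

text \<open>Every cup has exactly one end labelled L, so the L-labelled vertices are the
  L-ends of the cups together with the L-labelled rays.\<close>
lemma oriented_count_list:
  assumes O: "oriented c w" and L: "L = Vee \<or> L = Wedge"
  shows "count_list w L = card (fst c) + card {r\<in>snd c. w ! r = L}"
proof -
  note W = wf_diagD[OF orientedD(1)[OF O]]
  define L_end where "L_end p = (if w ! fst p = L then fst p else snd p)" for p :: "nat \<times> nat"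
  have fin: "finite (fst c)" "finite (snd c)" using oriented_finite[OF O] by auto
  have L_end_label: "w ! L_end p = L" if "p \<in> fst c" for p
    using that orientedD(3)[OF O, of "fst p" "snd p"] L by (auto simp: L_end_def)
  have L_end_in: "L_end p \<in> {fst p, snd p}" for p
    by (simp add: L_end_def)
  have "inj_on L_end (fst c)"
  proof (rule inj_onI)
    fix p q assume p: "p \<in> fst c" and q: "q \<in> fst c" and eq: "L_end p = L_end q"
    show "p = q"
    proof (rule ccontr)
      assume "p \<noteq> q"
      then have "{fst p, snd p} \<inter> {fst q, snd q} = {}" using W(3)[of "fst p" "snd p" "fst q" "snd q"] p q by simp
      then show False using eq L_end_in[of p] L_end_in[of q] by auto
    qed
  qed
  then have card_ends: "card (L_end ` fst c) = card (fst c)" by (rule card_image)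
  have "{v. v < length w \<and> w ! v = L} = L_end ` fst c \<union> {r\<in>snd c. w ! r = L}"
  proof (intro equalityI subsetI)
    fix v assume v: "v \<in> {v. v < length w \<and> w ! v = L}"
    then have "v \<in> snd c \<or> (\<exists>x. (v,x) \<in> fst c) \<or> (\<exists>x. (x,v) \<in> fst c)"
      using oriented_Vee_Wedge_not_free[OF O] L by auto
    moreover have "L_end (v,x) = v" if "(v,x) \<in> fst c" for x
      using v by (simp add: L_end_def)
    moreover have "L_end (x,v) = v" if "(x,v) \<in> fst c" for x
      using v orientedD(3)[OF O that] by (auto simp: L_end_def)
    ultimately show "v \<in> L_end ` fst c \<union> {r\<in>snd c. w ! r = L}"
      using v by (metis (mono_tags, lifting) UnI1 UnI2 image_eqI mem_Collect_eq)
  next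
    fix v assume "v \<in> L_end ` fst c \<union> {r\<in>snd c. w ! r = L}"
    then consider p where "p \<in> fst c" "v = L_end p" | "v \<in> snd c" "w ! v = L"
      by blast
    then show "v \<in> {v. v < length w \<and> w ! v = L}"
    proof cases
      case 1
      then show ?thesis
        using L_end_label[of p] L_end_in[of p] W(1)[of "fst p" "snd p"] by auto
    qed (use W(2) in auto)
  qed
  moreover have "L_end p \<notin> snd c" if "p \<in> fst c" for p
    using that L_end_in[of p] W(4)[of "fst p" "snd p"] by auto
  then have "L_end ` fst c \<inter> {r\<in>snd c. w ! r = L} = {}"
    by blast
  ultimately show ?thesis
    unfolding count_list_conv_card
    using card_Un_disjoint[of "L_end ` fst c" "{r\<in>snd c. w ! r = L}"] fin card_ends by simp
qed

text \<open>All Wedge rays lie left of all Vee rays, and the number of Wedge rays is the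
  number of Wedges minus the number of cups.\<close>
lemma oriented_ray_Wedge_Vee_absurd:
  assumes O1: "oriented c w1" and O2: "oriented c w2"
    and count: "count_list w1 Wedge = count_list w2 Wedge"
    and r: "r \<in> snd c" "w1 ! r = Wedge" "w2 ! r = Vee"
  shows False
proof -
  let ?S1 = "{s\<in>snd c. w1 ! s = Wedge}" and ?S2 = "{s\<in>snd c. w2 ! s = Wedge}"
    and ?left = "{s\<in>snd c. s < r}"
  have fin: "finite (snd c)" using oriented_finite[OF O1] by auto
  have "?S2 \<subseteq> ?left"
  proof
    fix s assume s: "s \<in> ?S2"
    then have "s \<noteq> r" "\<not> r < s"
      using r(3) orientedD(5)[OF O2 r(1), of s] by auto
    then show "s \<in> ?left" using s by auto
  qed
  then have "card ?S2 \<le> card ?left" using fin by (intro card_mono) auto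
  moreover have "insert r ?left \<subseteq> ?S1"
  proof
    fix s assume "s \<in> insert r ?left"
    then consider "s = r" | "s \<in> snd c" "s < r" by auto
    then show "s \<in> ?S1"
    proof cases
      case 2
      then show ?thesis
        using orientedD(4)[OF O1 2(1)] orientedD(5)[OF O1 2(1) r(1) 2(2)] r(2) by auto
    qed (use r in simp)
  qed
  then have "card (insert r ?left) \<le> card ?S1"
    using fin by (intro card_mono) auto
  moreover have "card (insert r ?left) = Suc (card ?left)"
    using fin by (intro card_insert_disjoint) auto
  moreover have "card ?S1 = card ?S2"
    using oriented_count_list[OF O1, of Wedge] oriented_count_list[OF O2, of Wedge] count by simp
  ultimately show False by linarith
qed

lemma oriented_ray_labels_unique:
  assumes O1: "oriented c w1" and O2: "oriented c w2"
    and count: "count_list w1 Wedge = count_list w2 Wedge" and r: "r \<in> snd c"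
  shows "w1 ! r = w2 ! r"
  using orientedD(4)[OF O1 r] orientedD(4)[OF O2 r] oriented_ray_Wedge_Vee_absurd[OF O1 O2 count r]
    oriented_ray_Wedge_Vee_absurd[OF O2 O1 count[symmetric] r] by auto

lemma oriented_relabel:
  assumes O: "oriented c w" and len: "length w' = length w"
    and same: "\<And>v. v < length w \<Longrightarrow> (\<forall>x. (v,x) \<notin> fst c \<and> (x,v) \<notin> fst c) \<Longrightarrow> w' ! v = w ! v"
    and cups: "\<And>x y. (x,y) \<in> fst c \<Longrightarrow> (w' ! x = Vee \<and> w' ! y = Wedge) \<or> (w' ! x = Wedge \<and> w' ! y = Vee)"
  shows "oriented c w'"
proof -
  note W = wf_diagD[OF orientedD(1)[OF O]]
  have ray_same: "w' ! r = w ! r" if "r \<in> snd c" for r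
    using that same W(2,4) by blast
  show ?thesis
  proof (rule orientedI)
    show "wf_diag (length w') c" using orientedD(1)[OF O] len by simp
    show "w' ! v = Circ \<or> w' ! v = Cross" if "v < length w'" "free_vertex c v" for v
      using orientedD(2)[OF O, of v] that same[of v] len unfolding free_vertex_iff by auto
    show "w' ! r = Vee \<or> w' ! r = Wedge" if "r \<in> snd c" for r
      using ray_same[OF that] orientedD(4)[OF O that] by simp
    show "\<not> (w' ! r = Vee \<and> w' ! s = Wedge)" if "r \<in> snd c" "s \<in> snd c" "r < s" for r s
      using ray_same[OF that(1)] ray_same[OF that(2)] orientedD(5)[OF O that] by simp
  qed (rule cups)
qed

section \<open>Blocks\<close>

definition block_of :: "weight \<Rightarrow> weight set" where
  "block_of w0 = {\<mu>. \<exists>\<sigma>. \<sigma> permutes {..<length w0}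
       \<and> (\<forall>i<length w0. w0 ! i \<in> {Circ, Cross} \<longrightarrow> \<sigma> i = i)
       \<and> \<mu> = permute_list \<sigma> w0}"

lemma is_block_iff: "is_block \<Lambda> \<longleftrightarrow> (\<exists>w0. \<Lambda> = block_of w0)"
  unfolding is_block_def block_of_def permute_list_def ..

lemma block_of_length: "\<mu> \<in> block_of w0 \<Longrightarrow> length \<mu> = length w0"
  unfolding block_of_def by auto

lemma block_of_count_list: "\<mu> \<in> block_of w0 \<Longrightarrow> count_list \<mu> x = count_list w0 x"
  unfolding block_of_def by (auto simp: mset_permute_list simp flip: count_mset)

lemma block_of_nth_Circ_Cross:
  assumes "\<mu> \<in> block_of w0" "\<mu>' \<in> block_of w0" "i < length w0" "\<mu> ! i = Circ \<or> \<mu> ! i = Cross"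
  shows "\<mu>' ! i = \<mu> ! i"
proof -
  have fixed: "\<nu> ! i = w0 ! i"
    if \<nu>: "\<nu> \<in> block_of w0" "\<nu> ! i = Circ \<or> \<nu> ! i = Cross \<or> w0 ! i = Circ \<or> w0 ! i = Cross" for \<nu>
  proof -
    obtain \<sigma> where \<sigma>: "\<sigma> permutes {..<length w0}"
      "\<forall>i<length w0. w0 ! i \<in> {Circ, Cross} \<longrightarrow> \<sigma> i = i" "\<nu> = permute_list \<sigma> w0"
      using \<nu>(1) unfolding block_of_def by blast
    have \<nu>_i: "\<nu> ! i = w0 ! \<sigma> i" using \<sigma>(1,3) assms(3) by (simp add: permute_list_nth)
    have "\<sigma> i = i"
    proof (cases "w0 ! i = Circ \<or> w0 ! i = Cross")
      case False
      then have "\<sigma> (\<sigma> i) = \<sigma> i"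
        using \<sigma>(2) permutes_in_image[OF \<sigma>(1)] assms(3) \<nu>(2) \<nu>_i by auto
      then show ?thesis using permutes_inj[OF \<sigma>(1)] by (simp add: inj_eq)
    qed (use \<sigma>(2) assms(3) in auto)
    then show ?thesis using \<nu>_i by simp
  qed
  show ?thesis
    using fixed[OF assms(1)] fixed[OF assms(2)] assms(4) by auto
qed

lemma block_of_permute_list:
  assumes "\<mu> \<in> block_of w0" "\<tau> permutes {..<length w0}"
    "\<And>i. i < length w0 \<Longrightarrow> \<mu> ! i = Circ \<or> \<mu> ! i = Cross \<Longrightarrow> \<tau> i = i"
  shows "permute_list \<tau> \<mu> \<in> block_of w0"
proof -
  obtain \<sigma> where \<sigma>: "\<sigma> permutes {..<length w0}"
    "\<forall>i<length w0. w0 ! i \<in> {Circ, Cross} \<longrightarrow> \<sigma> i = i" "\<mu> = permute_list \<sigma> w0"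
    using assms(1) unfolding block_of_def by blast
  have "permute_list \<tau> \<mu> = permute_list (\<sigma> \<circ> \<tau>) w0"
    using \<sigma>(3) permute_list_compose[of \<tau> w0 \<sigma>] assms(2) by simp
  moreover have "\<sigma> \<circ> \<tau> permutes {..<length w0}"
    by (rule permutes_compose[OF assms(2) \<sigma>(1)])
  moreover have "(\<sigma> \<circ> \<tau>) i = i" if "i < length w0" "w0 ! i \<in> {Circ, Cross}" for i
  proof -
    have "\<sigma> i = i" using \<sigma>(2) that by auto
    then have "\<mu> ! i = w0 ! i" using \<sigma>(1,3) that by (simp add: permute_list_nth)
    then show ?thesis using assms(3)[OF that(1)] that(2) \<open>\<sigma> i = i\<close> by auto
  qed
  ultimately show ?thesis unfolding block_of_def by blast
qed

definition cup_partner :: "(nat \<times> nat) set \<Rightarrow> nat \<Rightarrow> nat" where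
  "cup_partner C i = (if \<exists>j. (i,j) \<in> C \<or> (j,i) \<in> C then (SOME j. (i,j) \<in> C \<or> (j,i) \<in> C) else i)"

lemma cup_partner_eq:
  assumes wf: "wf_diag n c" and C: "C \<subseteq> fst c" and ij: "(i,j) \<in> C"
  shows "cup_partner C i = j" "cup_partner C j = i"
proof -
  note W = wf_diagD[OF wf]
  have ends_unique: "{x, y} = {i, j}" if "(x,y) \<in> C" "{x,y} \<inter> {i,j} \<noteq> {}" for x y
    using that W(3)[of x y i j] C ij by auto
  have "i < j" using W(1) C ij by blast
  then have "(i,j') \<in> C \<or> (j',i) \<in> C \<longleftrightarrow> j' = j" for j'
    using ends_unique[of i j'] ends_unique[of j' i] ij by (auto simp: doubleton_eq_iff)
  then show "cup_partner C i = j"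
    unfolding cup_partner_def by auto
  have "(j,i') \<in> C \<or> (i',j) \<in> C \<longleftrightarrow> i' = i" for i'
    using ends_unique[of j i'] ends_unique[of i' j] ij \<open>i < j\<close> by (auto simp: doubleton_eq_iff)
  then show "cup_partner C j = i"
    unfolding cup_partner_def by auto
qed

lemma cup_partner_other: "\<not> (\<exists>j. (i,j) \<in> C \<or> (j,i) \<in> C) \<Longrightarrow> cup_partner C i = i"
  unfolding cup_partner_def by simp

lemma cup_partner_permutes:
  assumes wf: "wf_diag n c" and C: "C \<subseteq> fst c"
  shows "cup_partner C permutes {..<n}"
proof -
  have "cup_partner C (cup_partner C i) = i" for i
    using cup_partner_eq[OF wf C] cup_partner_other[of i C] by metis
  moreover have "cup_partner C x = x" if "x \<notin> {..<n}" for x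
    using that wf_diagD(1)[OF wf] C by (intro cup_partner_other) fastforce
  ultimately show ?thesis
    unfolding permutes_def by metis
qed

definition clockwise_cups :: "diag \<Rightarrow> weight \<Rightarrow> (nat \<times> nat) set" where
  "clockwise_cups c w = {(i,j)\<in>fst c. w ! i = Wedge}"

text \<open>Swaps the labels at the two ends of each clockwise cup; as a permutation of w it
  stays in the block of w.\<close>
definition make_anticlockwise :: "diag \<Rightarrow> weight \<Rightarrow> weight" where
  "make_anticlockwise c w = permute_list (cup_partner (clockwise_cups c w)) w"

lemma make_anticlockwise_permutes:
  "oriented c w \<Longrightarrow> cup_partner (clockwise_cups c w) permutes {..<length w}"
  by (rule cup_partner_permutes[OF orientedD(1)]) (auto simp: clockwise_cups_def)

lemma length_make_anticlockwise [simp]: "length (make_anticlockwise c w) = length w"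
  unfolding make_anticlockwise_def by simp

lemma count_list_make_anticlockwise:
  "oriented c w \<Longrightarrow> count_list (make_anticlockwise c w) x = count_list w x"
  unfolding make_anticlockwise_def
  by (metis count_mset make_anticlockwise_permutes mset_permute_list)

lemma make_anticlockwise_nth_other:
  assumes O: "oriented c w" and v: "v < length w"
    and not_end: "\<forall>x. (v,x) \<notin> fst c \<and> (x,v) \<notin> fst c"
  shows "make_anticlockwise c w ! v = w ! v"
  using cup_partner_other[of v "clockwise_cups c w"] not_end
    permute_list_nth[OF make_anticlockwise_permutes[OF O] v]
  unfolding make_anticlockwise_def clockwise_cups_def by auto

lemma make_anticlockwise_nth_cup:
  assumes O: "oriented c w" and xy: "(x,y) \<in> fst c"
  shows "make_anticlockwise c w ! x = Vee \<and> make_anticlockwise c w ! y = Wedge"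
proof -
  note W = wf_diagD[OF orientedD(1)[OF O]]
  let ?C = "clockwise_cups c w"
  have len: "x < length w" "y < length w" using W(1)[OF xy] by auto
  have nth: "make_anticlockwise c w ! v = w ! cup_partner ?C v" if "v < length w" for v
    unfolding make_anticlockwise_def by (rule permute_list_nth[OF make_anticlockwise_permutes[OF O] that])
  show ?thesis
  proof (cases "w ! x = Wedge")
    case True
    then have "(x,y) \<in> ?C" using xy unfolding clockwise_cups_def by simp
    then have "cup_partner ?C x = y" "cup_partner ?C y = x"
      using cup_partner_eq[OF orientedD(1)[OF O], of ?C] by (auto simp: clockwise_cups_def)
    moreover have "w ! y = Vee" using orientedD(3)[OF O xy] True by auto
    ultimately show ?thesis using nth len True by simp
  next
    case False
    have "cup_partner ?C v = v" if "v = x \<or> v = y" for v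
    proof (rule cup_partner_other)
      show "\<not> (\<exists>u. (v,u) \<in> ?C \<or> (u,v) \<in> ?C)"
      proof
        assume "\<exists>u. (v,u) \<in> ?C \<or> (u,v) \<in> ?C"
        then obtain k l where kl: "(k,l) \<in> fst c" "w ! k = Wedge" "v \<in> {k,l}"
          unfolding clockwise_cups_def by auto
        then have "(k,l) \<noteq> (x,y)" using False by auto
        then show False using W(3)[OF kl(1) xy] kl(3) that by auto
      qed
    qed
    then show ?thesis using nth len False orientedD(3)[OF O xy] by auto
  qed
qed

lemma anticlockwise_make_anticlockwise:
  assumes "oriented c w"
  shows "anticlockwise c (make_anticlockwise c w)"
proof -
  have "oriented c (make_anticlockwise c w)"
    by (rule oriented_relabel[OF assms])
      (use make_anticlockwise_nth_other[OF assms] make_anticlockwise_nth_cup[OF assms] in auto)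
  then show ?thesis
    unfolding anticlockwise_def using make_anticlockwise_nth_cup[OF assms] by auto
qed

lemma make_anticlockwise_in_block_of:
  assumes O: "oriented c w" and w: "w \<in> block_of w0"
  shows "make_anticlockwise c w \<in> block_of w0"
  unfolding make_anticlockwise_def
proof (rule block_of_permute_list[OF w])
  show "cup_partner (clockwise_cups c w) permutes {..<length w0}"
    using make_anticlockwise_permutes[OF O] block_of_length[OF w] by simp
  fix i assume "i < length w0" "w ! i = Circ \<or> w ! i = Cross"
  then show "cup_partner (clockwise_cups c w) i = i"
    using orientedD(3)[OF O] by (intro cup_partner_other) (fastforce simp: clockwise_cups_def)
qed

section \<open>Closures of weights and restrictions of cup diagrams\<close>

lemma length_clw: "length (clw \<mu>) = count_list \<mu> Wedge + length \<mu> + count_list \<mu> Vee"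
  unfolding clw_def by simp

lemma clw_nth_left: "v < count_list \<mu> Wedge \<Longrightarrow> clw \<mu> ! v = Vee"
  unfolding clw_def by (simp add: nth_append)

lemma clw_nth_middle:
  "count_list \<mu> Wedge \<le> v \<Longrightarrow> v < count_list \<mu> Wedge + length \<mu>
    \<Longrightarrow> clw \<mu> ! v = \<mu> ! (v - count_list \<mu> Wedge)"
  unfolding clw_def by (simp add: nth_append, arith)

lemma clw_nth_right:
  "count_list \<mu> Wedge + length \<mu> \<le> v \<Longrightarrow> v < length (clw \<mu>) \<Longrightarrow> clw \<mu> ! v = Wedge"
  unfolding clw_def by (simp add: nth_append, arith)

lemma take_drop_clw: "take (length \<mu>) (drop (count_list \<mu> Wedge) (clw \<mu>)) = \<mu>"
  unfolding clw_def by simp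

text \<open>The cups of A inside the window of vertices p ..< p + n, shifted to start at 0;
  a cup with exactly one end in the window becomes a ray at that end.\<close>
definition restrict_diag :: "nat \<Rightarrow> nat \<Rightarrow> diag \<Rightarrow> diag" where
  "restrict_diag p n A = ((\<lambda>(i,j). (i - p, j - p)) ` {(i,j)\<in>fst A. p \<le> i \<and> j < p + n},
     (\<lambda>v. v - p) ` {v. p \<le> v \<and> v < p + n \<and> (\<exists>u. (u < p \<or> p + n \<le> u) \<and> ((u,v) \<in> fst A \<or> (v,u) \<in> fst A))})"

lemma restrict_diag_cup_iff:
  assumes "\<And>i j. (i,j) \<in> fst A \<Longrightarrow> i < j"
  shows "(x,y) \<in> fst (restrict_diag p n A) \<longleftrightarrow> (x + p, y + p) \<in> fst A \<and> y < n"
proof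
  assume "(x,y) \<in> fst (restrict_diag p n A)"
  then obtain i j where "(i,j) \<in> fst A" "p \<le> i" "j < p + n" "x = i - p" "y = j - p"
    unfolding restrict_diag_def by auto
  then show "(x + p, y + p) \<in> fst A \<and> y < n"
    using assms by fastforce
next
  assume "(x + p, y + p) \<in> fst A \<and> y < n"
  then have "(x + p, y + p) \<in> {(i,j)\<in>fst A. p \<le> i \<and> j < p + n}" by auto
  then show "(x,y) \<in> fst (restrict_diag p n A)"
    unfolding restrict_diag_def by (force intro: image_eqI[where x = "(x + p, y + p)"])
qed

lemma restrict_diag_ray_iff:
  "r \<in> snd (restrict_diag p n A) \<longleftrightarrow>
    r < n \<and> (\<exists>u. (u < p \<or> p + n \<le> u) \<and> ((u, r + p) \<in> fst A \<or> (r + p, u) \<in> fst A))"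
proof
  assume "r \<in> snd (restrict_diag p n A)"
  then show "r < n \<and> (\<exists>u. (u < p \<or> p + n \<le> u) \<and> ((u, r + p) \<in> fst A \<or> (r + p, u) \<in> fst A))"
    unfolding restrict_diag_def by auto
next
  assume "r < n \<and> (\<exists>u. (u < p \<or> p + n \<le> u) \<and> ((u, r + p) \<in> fst A \<or> (r + p, u) \<in> fst A))"
  then show "r \<in> snd (restrict_diag p n A)"
    unfolding restrict_diag_def by (force intro: image_eqI[where x = "r + p"])
qed

text \<open>The window p ..< p + n is where \<mu> sits inside clw \<mu>.\<close>
locale closure_orientation =
  fixes A :: diag and \<mu> :: weight and p n :: nat
  assumes oriented: "oriented A (clw \<mu>)" and closed: "snd A = {}"
    and p: "p = count_list \<mu> Wedge" and n: "n = length \<mu>"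
begin

lemmas wf = wf_diagD[OF orientedD(1)[OF oriented]]

lemma cup_less: "(i,j) \<in> fst A \<Longrightarrow> i < j"
  using wf(1) by blast

lemma nth_left: "v < p \<Longrightarrow> clw \<mu> ! v = Vee"
  using clw_nth_left p by simp

lemma nth_middle: "p \<le> v \<Longrightarrow> v < p + n \<Longrightarrow> clw \<mu> ! v = \<mu> ! (v - p)"
  using clw_nth_middle p n by simp

lemma nth_right: "p + n \<le> v \<Longrightarrow> v < length (clw \<mu>) \<Longrightarrow> clw \<mu> ! v = Wedge"
  using clw_nth_right p n by simp

lemma cup_labels:
  "(x,y) \<in> fst A \<Longrightarrow> (clw \<mu> ! x = Vee \<and> clw \<mu> ! y = Wedge) \<or> (clw \<mu> ! x = Wedge \<and> clw \<mu> ! y = Vee)"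
  using orientedD(3)[OF oriented] by blast

lemma cup_right_end_not_left: "(x,y) \<in> fst A \<Longrightarrow> p \<le> y"
  using cup_labels[of x y] nth_left[of x] nth_left[of y] cup_less[of x y] by fastforce

lemma cup_left_end_not_right: "(x,y) \<in> fst A \<Longrightarrow> x < p + n"
  using cup_labels[of x y] nth_right[of x] nth_right[of y] wf(1)[of x y] by fastforce

lemma cup_from_left: "(x,y) \<in> fst A \<Longrightarrow> x < p \<Longrightarrow> clw \<mu> ! y = Wedge"
  using cup_labels[of x y] nth_left[of x] by auto

lemma cup_to_right: "(x,y) \<in> fst A \<Longrightarrow> p + n \<le> y \<Longrightarrow> clw \<mu> ! x = Vee"
  using cup_labels[of x y] nth_right[of y] wf(1)[of x y] by auto

lemma restrict_cup_iff:
  "(x,y) \<in> fst (restrict_diag p n A) \<longleftrightarrow> (x + p, y + p) \<in> fst A \<and> y < n"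
  by (rule restrict_diag_cup_iff) (rule cup_less)

lemma restrict_ray_iff:
  "r \<in> snd (restrict_diag p n A) \<longleftrightarrow>
    r < n \<and> ((\<exists>u<p. (u, r + p) \<in> fst A) \<or> (\<exists>u\<ge>p + n. (r + p, u) \<in> fst A))"
  unfolding restrict_diag_ray_iff
  using cup_right_end_not_left cup_left_end_not_right by fastforce

lemma restrict_ray_label:
  assumes "r \<in> snd (restrict_diag p n A)"
  shows "(\<exists>u<p. (u, r + p) \<in> fst A) \<and> \<mu> ! r = Wedge \<or> (\<exists>u\<ge>p + n. (r + p, u) \<in> fst A) \<and> \<mu> ! r = Vee"
  using assms cup_from_left cup_to_right nth_middle[of "r + p"] unfolding restrict_ray_iff by force

lemma restrict_wf_diag: "wf_diag (length \<mu>) (restrict_diag p n A)"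
proof (rule wf_diagI)
  show "i < j \<and> j < length \<mu>" if "(i,j) \<in> fst (restrict_diag p n A)" for i j
    using that cup_less n unfolding restrict_cup_iff by fastforce
  show "r < length \<mu>" if "r \<in> snd (restrict_diag p n A)" for r
    using that n unfolding restrict_ray_iff by blast
  show "{i,j} \<inter> {k,l} = {}"
    if "(i,j) \<in> fst (restrict_diag p n A)" "(k,l) \<in> fst (restrict_diag p n A)" "(i,j) \<noteq> (k,l)"
    for i j k l
    using that wf(3)[of "i + p" "j + p" "k + p" "l + p"] unfolding restrict_cup_iff by auto
  show "\<not> (i < k \<and> k < j \<and> j < l)"
    if "(i,j) \<in> fst (restrict_diag p n A)" "(k,l) \<in> fst (restrict_diag p n A)" for i j k l
    using that wf(5)[of "i + p" "j + p" "k + p" "l + p"] unfolding restrict_cup_iff by auto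
  show "i \<notin> snd (restrict_diag p n A) \<and> j \<notin> snd (restrict_diag p n A)"
    if "(i,j) \<in> fst (restrict_diag p n A)" for i j
  proof -
    have c: "(i + p, j + p) \<in> fst A" "j < n" using that unfolding restrict_cup_iff by auto
    have "(u, v + p) \<notin> fst A" "(v + p, u) \<notin> fst A" if "v = i \<or> v = j" "u < p \<or> p + n \<le> u" for u v
      using that c wf(3)[OF _ c(1), of u "v + p"] wf(3)[OF _ c(1), of "v + p" u] cup_less[OF c(1)] by auto
    then show ?thesis unfolding restrict_ray_iff by auto
  qed
  show "\<not> (i < r \<and> r < j)" if "(i,j) \<in> fst (restrict_diag p n A)" "r \<in> snd (restrict_diag p n A)"
    for i j r
    using that wf(5)[of _ "r + p" "i + p" "j + p"] wf(5)[of "i + p" "j + p" "r + p"]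
    unfolding restrict_cup_iff restrict_ray_iff by fastforce
qed

lemma restrict_free_vertex:
  assumes "v < n" "free_vertex (restrict_diag p n A) v"
  shows "free_vertex A (v + p)"
proof -
  have "(v + p, x) \<notin> fst A" "(x, v + p) \<notin> fst A" for x
  proof -
    have "(v + p, x) \<in> fst A \<Longrightarrow> (v, x - p) \<in> fst (restrict_diag p n A) \<or> v \<in> snd (restrict_diag p n A)"
      using assms(1) cup_less[of "v + p" x] unfolding restrict_cup_iff restrict_ray_iff
      by (cases "x < p + n") auto
    moreover have "(x, v + p) \<in> fst A \<Longrightarrow> (x - p, v) \<in> fst (restrict_diag p n A) \<or> v \<in> snd (restrict_diag p n A)"
      using assms(1) unfolding restrict_cup_iff restrict_ray_iff
      by (cases "p \<le> x") auto
    ultimately show "(v + p, x) \<notin> fst A" "(x, v + p) \<notin> fst A"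
      using assms(2) unfolding free_vertex_iff by blast+
  qed
  then show ?thesis
    unfolding free_vertex_iff using closed by simp
qed

lemma oriented_restrict: "oriented (restrict_diag p n A) \<mu>"
proof (rule orientedI)
  show "wf_diag (length \<mu>) (restrict_diag p n A)"
    by (rule restrict_wf_diag)
  show "\<mu> ! v = Circ \<or> \<mu> ! v = Cross" if "v < length \<mu>" "free_vertex (restrict_diag p n A) v" for v
  proof -
    have "v + p < length (clw \<mu>)" using that(1) n p length_clw[of \<mu>] by simp
    then have "clw \<mu> ! (v + p) = Circ \<or> clw \<mu> ! (v + p) = Cross"
      using orientedD(2)[OF oriented] restrict_free_vertex that n by auto
    then show ?thesis using nth_middle[of "v + p"] that(1) n by simp
  qed
  show "(\<mu> ! x = Vee \<and> \<mu> ! y = Wedge) \<or> (\<mu> ! x = Wedge \<and> \<mu> ! y = Vee)"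
    if "(x,y) \<in> fst (restrict_diag p n A)" for x y
  proof -
    have c: "(x + p, y + p) \<in> fst A" "y < n" using that unfolding restrict_cup_iff by auto
    then show ?thesis
      using cup_labels[OF c(1)] nth_middle[of "x + p"] nth_middle[of "y + p"] cup_less[OF c(1)] by simp
  qed
  show "\<mu> ! r = Vee \<or> \<mu> ! r = Wedge" if "r \<in> snd (restrict_diag p n A)" for r
    using restrict_ray_label[OF that] by blast
  text \<open>A Vee ray left of a Wedge ray would come from crossing cups.\<close>
  show "\<not> (\<mu> ! r = Vee \<and> \<mu> ! s = Wedge)"
    if rs: "r \<in> snd (restrict_diag p n A)" "s \<in> snd (restrict_diag p n A)" "r < s" for r s
  proof
    assume "\<mu> ! r = Vee \<and> \<mu> ! s = Wedge"
    then obtain u u' where "(r + p, u) \<in> fst A" "p + n \<le> u" "(u', s + p) \<in> fst A" "u' < p"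
      using restrict_ray_label[OF rs(1)] restrict_ray_label[OF rs(2)] by auto
    moreover have "s < n" using rs(2) unfolding restrict_ray_iff by simp
    ultimately show False using wf(5)[of u' "s + p" "r + p" u] rs(3) by simp
  qed
qed

lemma restrict_ray_not_cup_end:
  "r \<in> snd (restrict_diag p n A) \<Longrightarrow> (r,x) \<notin> fst (restrict_diag p n A) \<and> (x,r) \<notin> fst (restrict_diag p n A)"
  using wf_diagD(4)[OF restrict_wf_diag] by blast

text \<open>Relabelling \<mu> along the cups of the restriction (keeping the counts) keeps A
  oriented: cups of A leaving the window end at rays of the restriction, whose labels are kept.\<close>
lemma oriented_clw_relabel:
  assumes len: "length \<mu>' = n" and Wedges: "count_list \<mu>' Wedge = p"
    and Vees: "count_list \<mu>' Vee = count_list \<mu> Vee"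
    and same: "\<And>v. v < n \<Longrightarrow> (\<forall>x. (v,x) \<notin> fst (restrict_diag p n A) \<and> (x,v) \<notin> fst (restrict_diag p n A))
      \<Longrightarrow> \<mu>' ! v = \<mu> ! v"
    and cups: "\<And>x y. (x,y) \<in> fst (restrict_diag p n A)
      \<Longrightarrow> (\<mu>' ! x = Vee \<and> \<mu>' ! y = Wedge) \<or> (\<mu>' ! x = Wedge \<and> \<mu>' ! y = Vee)"
  shows "oriented A (clw \<mu>')"
proof -
  have len': "length (clw \<mu>') = length (clw \<mu>)"
    using length_clw[of \<mu>'] length_clw[of \<mu>] len Wedges Vees p n by simp
  have left': "clw \<mu>' ! v = Vee" if "v < p" for v
    using clw_nth_left that Wedges by metis
  have middle': "clw \<mu>' ! v = \<mu>' ! (v - p)" if "p \<le> v" "v < p + n" for v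
    using clw_nth_middle[of \<mu>' v] that Wedges len by simp
  have right': "clw \<mu>' ! v = Wedge" if "p + n \<le> v" "v < length (clw \<mu>)" for v
    using clw_nth_right[of \<mu>' v] that Wedges len len' by simp
  have same_middle: "clw \<mu>' ! v = clw \<mu> ! v" if "p \<le> v" "v < p + n" "v - p \<in> snd (restrict_diag p n A)" for v
    using that same[of "v - p"] restrict_ray_not_cup_end[OF that(3)] middle' nth_middle by simp
  show ?thesis
  proof (rule oriented_relabel[OF oriented len'])
    fix v assume v: "v < length (clw \<mu>)" and not_end: "\<forall>x. (v,x) \<notin> fst A \<and> (x,v) \<notin> fst A"
    then have "clw \<mu> ! v = Circ \<or> clw \<mu> ! v = Cross"
      using orientedD(2)[OF oriented v] closed unfolding free_vertex_iff by simp
    then have window: "p \<le> v" "v < p + n"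
      using nth_left[of v] nth_right[of v] v by (cases "p \<le> v"; cases "v < p + n"; auto)+
    have "\<forall>x. (v - p, x) \<notin> fst (restrict_diag p n A) \<and> (x, v - p) \<notin> fst (restrict_diag p n A)"
      using not_end window unfolding restrict_cup_iff by auto
    then show "clw \<mu>' ! v = clw \<mu> ! v"
      using same[of "v - p"] window middle' nth_middle by simp
  next
    fix x y assume xy: "(x,y) \<in> fst A"
    have "x < y" "y < length (clw \<mu>)" "x < p + n" using wf(1)[OF xy] cup_left_end_not_right[OF xy] by auto
    show "(clw \<mu>' ! x = Vee \<and> clw \<mu>' ! y = Wedge) \<or> (clw \<mu>' ! x = Wedge \<and> clw \<mu>' ! y = Vee)"
    proof (cases "x < p"; cases "y < p + n")
      assume "x < p" "y < p + n"
      then have "y - p \<in> snd (restrict_diag p n A)" "p \<le> y"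
        using xy cup_right_end_not_left[OF xy] unfolding restrict_ray_iff by (auto intro!: exI[of _ x])
      then show ?thesis
        using \<open>x < p\<close> \<open>y < p + n\<close> same_middle[of y] left' cup_from_left[OF xy] by simp
    next
      assume "\<not> x < p" "y < p + n"
      then have "(x - p, y - p) \<in> fst (restrict_diag p n A)"
        using xy \<open>x < y\<close> unfolding restrict_cup_iff by auto
      then show ?thesis
        using cups[of "x - p" "y - p"] middle'[of x] middle'[of y] \<open>\<not> x < p\<close> \<open>y < p + n\<close> \<open>x < y\<close> by simp
    next
      assume "\<not> x < p" "\<not> y < p + n"
      then have "x - p \<in> snd (restrict_diag p n A)"
        using xy \<open>x < p + n\<close> unfolding restrict_ray_iff by (auto intro!: exI[of _ y])
      then show ?thesis
        using \<open>\<not> x < p\<close> \<open>\<not> y < p + n\<close> \<open>x < p + n\<close> \<open>y < length (clw \<mu>)\<close> same_middle[of x]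
          right'[of y] cup_to_right[OF xy] by simp
    qed (use left' right' \<open>y < length (clw \<mu>)\<close> in simp)
  qed
qed

lemma anticlockwise_clw_iff_restrict:
  "anticlockwise A (clw \<mu>) \<longleftrightarrow> anticlockwise (restrict_diag p n A) \<mu>"
proof
  assume D: "anticlockwise A (clw \<mu>)"
  have "\<mu> ! x = Vee \<and> \<mu> ! y = Wedge" if "(x,y) \<in> fst (restrict_diag p n A)" for x y
  proof -
    have c: "(x + p, y + p) \<in> fst A" "y < n" using that unfolding restrict_cup_iff by auto
    then show ?thesis
      using D nth_middle[of "x + p"] nth_middle[of "y + p"] cup_less[OF c(1)]
      unfolding anticlockwise_def by fastforce
  qed
  then show "anticlockwise (restrict_diag p n A) \<mu>"
    unfolding anticlockwise_def using oriented_restrict by blast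
next
  assume D: "anticlockwise (restrict_diag p n A) \<mu>"
  have "clw \<mu> ! x = Vee \<and> clw \<mu> ! y = Wedge" if xy: "(x,y) \<in> fst A" for x y
  proof (cases "x < p"; cases "y < p + n")
    assume "\<not> x < p" "y < p + n"
    then have "(x - p, y - p) \<in> fst (restrict_diag p n A)"
      using xy cup_less[OF xy] unfolding restrict_cup_iff by auto
    then show ?thesis
      using D \<open>\<not> x < p\<close> \<open>y < p + n\<close> cup_less[OF xy] nth_middle[of x] nth_middle[of y]
      unfolding anticlockwise_def by fastforce
  qed (use nth_left cup_from_left[OF xy] cup_to_right[OF xy] nth_right wf(1)[OF xy] in auto)
  then show "anticlockwise A (clw \<mu>)"
    unfolding anticlockwise_def using oriented by blast
qed

lemma deg_clw_eq_deg_restrict: "deg A (clw \<mu>) = deg (restrict_diag p n A) \<mu>"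
proof -
  let ?shift = "\<lambda>(x,y). (x + p, y + p :: nat)"
  have "{(i,j)\<in>fst A. clw \<mu> ! i = Wedge} = ?shift ` {(x,y)\<in>fst (restrict_diag p n A). \<mu> ! x = Wedge}"
  proof (intro equalityI subsetI; clarify)
    fix i j assume ij: "(i,j) \<in> fst A" "clw \<mu> ! i = Wedge"
    then have "p \<le> i" "i < p + n" "j < p + n" "i < j"
      using nth_left[of i] cup_left_end_not_right cup_to_right[of i j] cup_less
      by (fastforce simp: not_less[symmetric])+
    then show "(i,j) \<in> ?shift ` {(x,y)\<in>fst (restrict_diag p n A). \<mu> ! x = Wedge}"
      using ij nth_middle[of i] unfolding restrict_cup_iff
      by (auto intro!: image_eqI[where x = "(i - p, j - p)"])
  next
    fix x y assume "(x,y) \<in> fst (restrict_diag p n A)" "\<mu> ! x = Wedge"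
    then show "(x + p, y + p) \<in> fst A \<and> clw \<mu> ! (x + p) = Wedge"
      using nth_middle[of "x + p"] cup_less[of "x + p" "y + p"] unfolding restrict_cup_iff by auto
  qed
  moreover have "inj_on ?shift X" for X
    by (auto simp: inj_on_def)
  ultimately show ?thesis
    unfolding deg_def by (simp add: card_image)
qed

end

section \<open>Degree-zero cup diagrams of closures are closed\<close>

lemma count_list_take_less:
  assumes "k < length xs" "xs ! k = x"
  shows "count_list (take k xs) x < count_list xs x"
proof -
  have "xs = take k xs @ xs ! k # drop (Suc k) xs"
    using assms(1) by (rule id_take_nth_drop)
  then have "count_list xs x = count_list (take k xs) x + Suc (count_list (drop (Suc k) xs) x)"
    using assms(2) by (metis count_list.simps(2) count_list_append plus_1_eq_Suc add.commute)
  then show ?thesis by simp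
qed

lemma count_list_replicate: "count_list (replicate k x) y = (if x = y then k else 0)"
  by (induction k) auto

lemma clw_prefix_Wedge_less_Vee:
  assumes "r < length (clw \<alpha>)" "clw \<alpha> ! r = Wedge"
  shows "count_list (take r (clw \<alpha>)) Wedge < count_list (take r (clw \<alpha>)) Vee"
proof -
  define p q where "p = count_list \<alpha> Wedge" and "q = count_list \<alpha> Vee"
  have clw: "clw \<alpha> = replicate p Vee @ \<alpha> @ replicate q Wedge"
    unfolding clw_def p_def q_def ..
  have "p \<le> r"
    using assms(2) clw_nth_left[of r \<alpha>] unfolding p_def by (cases "r < count_list \<alpha> Wedge") auto
  show ?thesis
  proof (cases "r < p + length \<alpha>")
    case True
    then have "take r (clw \<alpha>) = replicate p Vee @ take (r - p) \<alpha>"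
      using \<open>p \<le> r\<close> unfolding clw by (simp add: take_append)
    moreover have "count_list (take (r - p) \<alpha>) Wedge < p"
      using count_list_take_less[of "r - p" \<alpha>] True \<open>p \<le> r\<close> assms(2) clw_nth_middle[of \<alpha> r]
      unfolding p_def by simp
    ultimately show ?thesis by (simp add: count_list_replicate)
  next
    case False
    have "r < p + length \<alpha> + q"
      using assms(1) length_clw[of \<alpha>] unfolding p_def q_def by simp
    then have "take r (clw \<alpha>) = replicate p Vee @ \<alpha> @ replicate (r - p - length \<alpha>) Wedge"
      using False \<open>p \<le> r\<close> unfolding clw by (auto simp: take_append min_def)
    then show ?thesis
      using False \<open>r < p + length \<alpha> + q\<close> by (simp add: count_list_replicate p_def[symmetric] q_def[symmetric])
  qed
qed

lemma anticlockwise_Vee_left_of_Wedge_ray: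
  assumes D: "anticlockwise c w" and r: "r \<in> snd c" "w ! r = Wedge"
    and v: "v < r" "w ! v = Vee"
  shows "\<exists>l<r. (v,l) \<in> fst c"
proof -
  have O: "oriented c w" and lab: "\<And>x y. (x,y) \<in> fst c \<Longrightarrow> w ! x = Vee \<and> w ! y = Wedge"
    using D unfolding anticlockwise_def by auto
  note W = wf_diagD[OF orientedD(1)[OF O]]
  have "v \<notin> snd c" using orientedD(5)[OF O _ r(1) v(1)] v(2) r(2) by auto
  moreover have "(i,v) \<notin> fst c" for i using lab[of i v] v(2) by auto
  ultimately obtain l where l: "(v,l) \<in> fst c"
    using oriented_Vee_Wedge_not_free[OF O, of v] v W(2)[OF r(1)] by auto
  moreover have "l \<noteq> r" "\<not> (v < r \<and> r < l)" using W(4)[OF l] W(6)[OF l r(1)] r(1) by auto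
  ultimately show ?thesis using v(1) W(1)[OF l] by (intro exI[of _ l]) auto
qed

text \<open>Sending each Vee left of a Wedge ray to the other end of its cup injects the Vee's
  into the Wedge's left of the ray.\<close>
lemma anticlockwise_prefix_Vee_le_Wedge:
  assumes D: "anticlockwise c w" and r: "r \<in> snd c" "w ! r = Wedge"
  shows "count_list (take r w) Vee \<le> count_list (take r w) Wedge"
proof -
  have O: "oriented c w" and lab: "\<And>x y. (x,y) \<in> fst c \<Longrightarrow> w ! x = Vee \<and> w ! y = Wedge"
    using D unfolding anticlockwise_def by auto
  note W = wf_diagD[OF orientedD(1)[OF O]]
  have prefix: "count_list (take r w) x = card {v. v < r \<and> w ! v = x}" for x
  proof -
    have "{v. v < length (take r w) \<and> take r w ! v = x} = {v. v < r \<and> w ! v = x}"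
      using W(2)[OF r(1)] by auto
    then show ?thesis unfolding count_list_conv_card by simp
  qed
  define partner where "partner v = (SOME l. l < r \<and> (v,l) \<in> fst c)" for v
  have partner: "(v, partner v) \<in> fst c \<and> partner v < r" if "v < r" "w ! v = Vee" for v
    using someI_ex[OF anticlockwise_Vee_left_of_Wedge_ray[OF D r that]] unfolding partner_def by blast
  have "inj_on partner {v. v < r \<and> w ! v = Vee}"
  proof (rule inj_onI)
    fix v v' assume v: "v \<in> {v. v < r \<and> w ! v = Vee}" and v': "v' \<in> {v. v < r \<and> w ! v = Vee}"
      and eq: "partner v = partner v'"
    have "(v, partner v) \<in> fst c" "(v', partner v) \<in> fst c"
      using partner[of v] partner[of v'] v v' eq by auto
    then show "v = v'" using W(3)[of v "partner v" v' "partner v"] by auto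
  qed
  moreover have "partner ` {v. v < r \<and> w ! v = Vee} \<subseteq> {v. v < r \<and> w ! v = Wedge}"
  proof clarify
    fix v assume "v < r" "w ! v = Vee"
    then show "partner v < r \<and> w ! partner v = Wedge"
      using partner[of v] lab[of v "partner v"] by auto
  qed
  ultimately show ?thesis
    unfolding prefix by (intro card_inj_on_le) auto
qed

text \<open>The cup diagram of a closure has no Wedge rays by the two prefix counts above, and
  then no Vee rays either, since a closure has as many Vee's as Wedge's.\<close>
lemma anticlockwise_clw_no_rays:
  assumes D: "anticlockwise c (clw \<alpha>)"
  shows "snd c = {}"
proof -
  have O: "oriented c (clw \<alpha>)" using D unfolding anticlockwise_def by simp
  have no_Wedge: "{r\<in>snd c. clw \<alpha> ! r = Wedge} = {}"
    using anticlockwise_prefix_Vee_le_Wedge[OF D] clw_prefix_Wedge_less_Vee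
      wf_diagD(2)[OF orientedD(1)[OF O]] by fastforce
  have "count_list (clw \<alpha>) Vee = count_list (clw \<alpha>) Wedge"
    unfolding clw_def by (simp add: count_list_replicate)
  then have "card {r\<in>snd c. clw \<alpha> ! r = Vee} = 0"
    using oriented_count_list[OF O, of Vee] oriented_count_list[OF O, of Wedge] no_Wedge by simp
  then have "{r\<in>snd c. clw \<alpha> ! r = Vee} = {}"
    using oriented_finite(2)[OF O] by simp
  then show ?thesis
    using no_Wedge orientedD(4)[OF O] by blast
qed

section \<open>The closure map\<close>

lemma anticlockwise_block_of_unique:
  assumes D1: "anticlockwise a \<alpha>1" and D2: "anticlockwise a \<alpha>2"
    and b1: "\<alpha>1 \<in> block_of w0" and b2: "\<alpha>2 \<in> block_of w0"
  shows "\<alpha>1 = \<alpha>2"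
proof (rule nth_equalityI)
  have O1: "oriented a \<alpha>1" and lab1: "\<And>x y. (x,y) \<in> fst a \<Longrightarrow> \<alpha>1 ! x = Vee \<and> \<alpha>1 ! y = Wedge"
    using D1 unfolding anticlockwise_def by auto
  have O2: "oriented a \<alpha>2" and lab2: "\<And>x y. (x,y) \<in> fst a \<Longrightarrow> \<alpha>2 ! x = Vee \<and> \<alpha>2 ! y = Wedge"
    using D2 unfolding anticlockwise_def by auto
  show "length \<alpha>1 = length \<alpha>2"
    using block_of_length[OF b1] block_of_length[OF b2] by simp
  fix v assume v: "v < length \<alpha>1"
  consider "free_vertex a v" | "v \<in> snd a" | x where "(v,x) \<in> fst a" | x where "(x,v) \<in> fst a"
    unfolding free_vertex_iff by blast
  then show "\<alpha>1 ! v = \<alpha>2 ! v"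
  proof cases
    case 1
    then show ?thesis
      using orientedD(2)[OF O1 v] block_of_nth_Circ_Cross[OF b1 b2] v block_of_length[OF b1] by auto
  next
    case 2
    then show ?thesis
      using oriented_ray_labels_unique[OF O1 O2] block_of_count_list[OF b1] block_of_count_list[OF b2] by simp
  qed (use lab1 lab2 in metis)+
qed

lemma the_block_of_weight_with_cup_under:
  assumes O: "oriented a w" and w: "w \<in> block_of w0"
  shows "(THE \<alpha>. \<alpha> \<in> block_of w0 \<and> cup_under \<alpha> = a) = make_anticlockwise a w"
proof (rule the_equality)
  show "make_anticlockwise a w \<in> block_of w0 \<and> cup_under (make_anticlockwise a w) = a"
    using make_anticlockwise_in_block_of[OF O w] cup_under_eqI[OF anticlockwise_make_anticlockwise[OF O]]
    by simp
  fix \<alpha> assume "\<alpha> \<in> block_of w0 \<and> cup_under \<alpha> = a"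
  then show "\<alpha> = make_anticlockwise a w"
    using anticlockwise_cup_under[of \<alpha>] anticlockwise_make_anticlockwise[OF O]
      make_anticlockwise_in_block_of[OF O w] anticlockwise_block_of_unique by metis
qed

lemma cl_cup_block_of:
  "oriented a w \<Longrightarrow> w \<in> block_of w0
    \<Longrightarrow> cl_cup (block_of w0) a = cup_under (clw (make_anticlockwise a w))"
  unfolding cl_cup_def by (simp add: the_block_of_weight_with_cup_under)

lemma cl_cap_eq_cl_cup: "cl_cap \<Lambda> b = cl_cup \<Lambda> b"
  unfolding cl_cap_def cl_cup_def cap_over_def ..

text \<open>A and a are the degree-0 cup diagrams of the closure of the anticlockwise
  relabelling of w and of that relabelling itself.\<close>
lemma oriented_cl_cup_block_of:
  assumes O: "oriented a w" and w: "w \<in> block_of w0"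
  defines "A \<equiv> cl_cup (block_of w0) a"
  shows "oriented A (clw w)" "snd A = {}"
    "restrict_diag (count_list w0 Wedge) (length w0) A = a" "deg A (clw w) = deg a w"
proof -
  define \<alpha> p n where "\<alpha> = make_anticlockwise a w" and "p = count_list w0 Wedge" and "n = length w0"
  have A: "A = cup_under (clw \<alpha>)"
    unfolding A_def \<alpha>_def by (rule cl_cup_block_of[OF O w])
  have pw: "p = count_list w Wedge" and nw: "n = length w"
    using block_of_count_list[OF w] block_of_length[OF w] unfolding p_def n_def by simp_all
  have D: "anticlockwise A (clw \<alpha>)"
    unfolding A by (rule anticlockwise_cup_under)
  show closed: "snd A = {}"
    by (rule anticlockwise_clw_no_rays[OF D])
  interpret \<alpha>: closure_orientation A \<alpha> p n
    using D closed pw nw count_list_make_anticlockwise[OF O]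
    unfolding anticlockwise_def \<alpha>_def by unfold_locales simp_all
  show restrict: "restrict_diag p n A = a"
    using cup_under_eqI[OF \<alpha>.anticlockwise_clw_iff_restrict[THEN iffD1, OF D]]
      cup_under_eqI[OF anticlockwise_make_anticlockwise[OF O]] unfolding \<alpha>_def by simp
  show oriented: "oriented A (clw w)"
  proof (rule \<alpha>.oriented_clw_relabel)
    show "w ! v = \<alpha> ! v"
      if "v < n" "\<forall>x. (v,x) \<notin> fst (restrict_diag p n A) \<and> (x,v) \<notin> fst (restrict_diag p n A)" for v
      using make_anticlockwise_nth_other[OF O, of v] that restrict nw unfolding \<alpha>_def by simp
  qed (use pw nw count_list_make_anticlockwise[OF O] orientedD(3)[OF O] restrict in \<open>simp_all add: \<alpha>_def\<close>)
  interpret w: closure_orientation A w p n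
    using oriented closed pw nw by unfold_locales
  show "deg A (clw w) = deg a w"
    using w.deg_clw_eq_deg_restrict restrict by simp
qed

lemma restrict_closed_cup_diagram:
  assumes OA: "oriented A (clw \<mu>)" and closed: "snd A = {}" and \<mu>: "\<mu> \<in> block_of w0"
  defines "a \<equiv> restrict_diag (count_list w0 Wedge) (length w0) A"
  shows "oriented a \<mu>" "cl_cup (block_of w0) a = A"
proof -
  define p n where "p = count_list w0 Wedge" and "n = length w0"
  interpret \<mu>: closure_orientation A \<mu> p n
    using OA closed block_of_count_list[OF \<mu>] block_of_length[OF \<mu>]
    unfolding p_def n_def by unfold_locales simp_all
  show Oa: "oriented a \<mu>"
    unfolding a_def p_def[symmetric] n_def[symmetric] by (rule \<mu>.oriented_restrict)
  define \<alpha> where "\<alpha> = make_anticlockwise a \<mu>"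
  have "oriented A (clw \<alpha>)"
  proof (rule \<mu>.oriented_clw_relabel)
    show "\<alpha> ! v = \<mu> ! v"
      if "v < n" "\<forall>x. (v,x) \<notin> fst (restrict_diag p n A) \<and> (x,v) \<notin> fst (restrict_diag p n A)" for v
      using make_anticlockwise_nth_other[OF Oa, of v] that \<mu>.n unfolding \<alpha>_def a_def p_def n_def by simp
  qed (use \<mu>.n \<mu>.p count_list_make_anticlockwise[OF Oa] make_anticlockwise_nth_cup[OF Oa]
      in \<open>simp_all add: \<alpha>_def a_def p_def n_def\<close>)
  then interpret \<alpha>: closure_orientation A \<alpha> p n
    using closed \<mu>.n \<mu>.p count_list_make_anticlockwise[OF Oa] unfolding \<alpha>_def by unfold_locales simp_all
  have "anticlockwise A (clw \<alpha>)"
    using \<alpha>.anticlockwise_clw_iff_restrict anticlockwise_make_anticlockwise[OF Oa]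
    unfolding \<alpha>_def a_def p_def n_def by simp
  then show "cl_cup (block_of w0) a = A"
    using cl_cup_block_of[OF Oa \<mu>] cup_under_eqI unfolding \<alpha>_def by simp
qed

text \<open>The inverse of the closure map on a block: restrict both diagrams to the window
  of the original vertices and cut the weight back to it.\<close>
definition open_circ :: "nat \<Rightarrow> nat \<Rightarrow> circ \<Rightarrow> circ" where
  "open_circ p n x = (case x of (A, \<nu>, B) \<Rightarrow> (restrict_diag p n A, take n (drop p \<nu>), restrict_diag p n B))"

lemma cl_circ_block_of:
  assumes "x \<in> circ_diagrams (block_of w0)"
  shows "cl_circ (block_of w0) x \<in> closed_circ_diagrams (clw ` block_of w0)"
    and "open_circ (count_list w0 Wedge) (length w0) (cl_circ (block_of w0) x) = x"
    and "deg_circ (cl_circ (block_of w0) x) = deg_circ x"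
proof -
  obtain a w b where x: "x = (a, w, b)" "oriented a w" "oriented b w" "w \<in> block_of w0"
    using assms unfolding circ_diagrams_def oriented_circ_def by auto
  have "take (length w0) (drop (count_list w0 Wedge) (clw w)) = w"
    using take_drop_clw[of w] block_of_count_list[OF x(4)] block_of_length[OF x(4)] by simp
  then show "cl_circ (block_of w0) x \<in> closed_circ_diagrams (clw ` block_of w0)"
    "open_circ (count_list w0 Wedge) (length w0) (cl_circ (block_of w0) x) = x"
    "deg_circ (cl_circ (block_of w0) x) = deg_circ x"
    using oriented_cl_cup_block_of[OF x(2,4)] oriented_cl_cup_block_of[OF x(3,4)] x(1,4)
    by (auto simp: cl_circ_def cl_cap_eq_cl_cup closed_circ_diagrams_def oriented_circ_def
        closed_circ_def open_circ_def deg_circ_def)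
qed

lemma open_circ_block_of:
  assumes "y \<in> closed_circ_diagrams (clw ` block_of w0)"
  shows "open_circ (count_list w0 Wedge) (length w0) y \<in> circ_diagrams (block_of w0)"
    and "cl_circ (block_of w0) (open_circ (count_list w0 Wedge) (length w0) y) = y"
proof -
  obtain A \<mu> B where y: "y = (A, clw \<mu>, B)" "\<mu> \<in> block_of w0"
    "oriented A (clw \<mu>)" "oriented B (clw \<mu>)" "snd A = {}" "snd B = {}"
    using assms unfolding closed_circ_diagrams_def oriented_circ_def closed_circ_def by auto
  have "take (length w0) (drop (count_list w0 Wedge) (clw \<mu>)) = \<mu>"
    using take_drop_clw[of \<mu>] block_of_count_list[OF y(2)] block_of_length[OF y(2)] by simp
  then show "open_circ (count_list w0 Wedge) (length w0) y \<in> circ_diagrams (block_of w0)"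
    "cl_circ (block_of w0) (open_circ (count_list w0 Wedge) (length w0) y) = y"
    using restrict_closed_cup_diagram[OF y(3,5,2)] restrict_closed_cup_diagram[OF y(4,6,2)] y(1,2)
    by (auto simp: cl_circ_def cl_cap_eq_cl_cup circ_diagrams_def oriented_circ_def open_circ_def)
qed

theorem lemma4p2:
  assumes "is_block \<Lambda>"
  shows "bij_betw (cl_circ \<Lambda>) (circ_diagrams \<Lambda>) (closed_circ_diagrams (clw ` \<Lambda>))
    \<and> (\<forall>x\<in>circ_diagrams \<Lambda>. deg_circ (cl_circ \<Lambda> x) = deg_circ x)"
proof -
  obtain w0 where \<Lambda>: "\<Lambda> = block_of w0"
    using assms unfolding is_block_iff by blast
  have "bij_betw (cl_circ \<Lambda>) (circ_diagrams \<Lambda>) (closed_circ_diagrams (clw ` \<Lambda>))"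
    unfolding \<Lambda>
    by (rule bij_betw_byWitness[where f' = "open_circ (count_list w0 Wedge) (length w0)"])
      (use cl_circ_block_of open_circ_block_of in auto)
  then show ?thesis
    using cl_circ_block_of(3) unfolding \<Lambda> by blast
qed

end
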